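(* Let $\mathcal{H}$ be a family of digraphs, $D$ a digraph and $X$ an $\mathcal{H}$-deletion set of $D$. Let $F\subseteq D$ be isomorphic to some graph in $\mathcal{H}$, and suppose that for each $(x,y)\in V(F)\times V(F)$ there is a directed path $P_{xy}$ from $x$ to $y$ in $D$. Then there exists a vertex $a\in X$ such that for every $v\in V(F)$ there is a directed path from $v$ to $a$ and a directed path from $a$ to $v$, both contained in $\bigcup_{(x,y)\in V(F)\times V(F)}P_{xy}$.
   Context: Subgraphs are not necessarily induced; strong components are maximal sets of mutually reachable vertices. $X\subseteq V(D)$ is an $\mathcal{H}$-deletion set of $D$ if no strong component of $D-X$ contains a subgraph isomorphic to a graph in $\mathcal{H}$. *)

theory Defs
  imports Main
begin

type_synonym 'a digraph = "'a set \<times> ('a \<times> 'a) set"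

definition verts :: "'a digraph \<Rightarrow> 'a set" where "verts G = fst G"
definition arcs :: "'a digraph \<Rightarrow> ('a \<times> 'a) set" where "arcs G = snd G"

definition digraph :: "'a digraph \<Rightarrow> bool" where
  "digraph G \<longleftrightarrow> verts G \<noteq> {} \<and> finite (verts G) \<and> arcs G \<subseteq> verts G \<times> verts G
     \<and> (\<forall>v. (v, v) \<notin> arcs G)"

definition subgraph :: "'a digraph \<Rightarrow> 'a digraph \<Rightarrow> bool" where
  "subgraph F G \<longleftrightarrow> digraph F \<and> verts F \<subseteq> verts G \<and> arcs F \<subseteq> arcs G"

definition isomorphic :: "'a digraph \<Rightarrow> 'b digraph \<Rightarrow> bool" where
  "isomorphic F H \<longleftrightarrow> (\<exists>f. bij_betw f (verts F) (verts H) \<and>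
     (\<forall>u\<in>verts F. \<forall>v\<in>verts F. (u, v) \<in> arcs F \<longleftrightarrow> (f u, f v) \<in> arcs H))"

definition contains_member :: "'a digraph \<Rightarrow> 'b digraph set \<Rightarrow> bool" where
  "contains_member G \<H> \<longleftrightarrow> (\<exists>F H. subgraph F G \<and> H \<in> \<H> \<and> isomorphic F H)"

definition induced :: "'a digraph \<Rightarrow> 'a set \<Rightarrow> 'a digraph" where
  "induced G S = (verts G \<inter> S, arcs G \<inter> (S \<times> S))"

definition delete_verts :: "'a digraph \<Rightarrow> 'a set \<Rightarrow> 'a digraph" where
  "delete_verts G X = induced G (verts G - X)"

definition reach :: "'a digraph \<Rightarrow> 'a \<Rightarrow> 'a \<Rightarrow> bool" where
  "reach G x y \<longleftrightarrow> (x, y) \<in> (arcs G)\<^sup>*"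

definition strong_component :: "'a digraph \<Rightarrow> 'a set \<Rightarrow> bool" where
  "strong_component G C \<longleftrightarrow> C \<noteq> {} \<and> C \<subseteq> verts G \<and>
     (\<forall>x\<in>C. \<forall>y\<in>C. reach G x y \<and> reach G y x) \<and>
     (\<forall>x\<in>C. \<forall>v\<in>verts G. reach G x v \<and> reach G v x \<longrightarrow> v \<in> C)"

definition deletion_set :: "'b digraph set \<Rightarrow> 'a digraph \<Rightarrow> 'a set \<Rightarrow> bool" where
  "deletion_set \<H> D X \<longleftrightarrow> X \<subseteq> verts D \<and>
     (\<forall>C. strong_component (delete_verts D X) C \<longrightarrow>
        \<not> contains_member (induced (delete_verts D X) C) \<H>)"

definition path_arcs :: "'a list \<Rightarrow> ('a \<times> 'a) set" where
  "path_arcs xs = set (zip xs (tl xs))"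

definition path_graph :: "'a list \<Rightarrow> 'a digraph" where
  "path_graph xs = (set xs, path_arcs xs)"

definition dpath :: "'a digraph \<Rightarrow> 'a list \<Rightarrow> 'a \<Rightarrow> 'a \<Rightarrow> bool" where
  "dpath G xs x y \<longleftrightarrow> xs \<noteq> [] \<and> distinct xs \<and> hd xs = x \<and> last xs = y \<and>
     set xs \<subseteq> verts G \<and> path_arcs xs \<subseteq> arcs G"

definition graph_Union :: "'a digraph set \<Rightarrow> 'a digraph" where
  "graph_Union S = (\<Union>G\<in>S. verts G, \<Union>G\<in>S. arcs G)"

end

theory Submission
  imports Defs
begin

text \<open>The paths \<open>P x y\<close> glue the vertices of \<open>F\<close> into a single strongly connected
  subgraph \<open>U\<close> of \<open>D\<close>. If \<open>U\<close> avoided \<open>X\<close>, then all of \<open>F\<close> would lie in one strong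
  component of \<open>D - X\<close>, which would then contain a copy of a member of \<open>\<H>\<close>.
  Hence \<open>U\<close> meets \<open>X\<close> in some vertex \<open>a\<close>, and strong connectivity of \<open>U\<close> yields the
  required paths through \<open>a\<close>.\<close>

definition strongly_connected :: "'a digraph \<Rightarrow> bool" where
  "strongly_connected G \<longleftrightarrow> (\<forall>u\<in>verts G. \<forall>w\<in>verts G. reach G u w)"

definition paths_union :: "('a \<Rightarrow> 'a \<Rightarrow> 'a list) \<Rightarrow> 'a set \<Rightarrow> 'a digraph" where
  "paths_union P S = graph_Union {path_graph (P x y) | x y. x \<in> S \<and> y \<in> S}"

lemma path_arcs_Nil [simp]: "path_arcs [] = {}"
  by (simp add: path_arcs_def)

lemma path_arcs_singleton [simp]: "path_arcs [x] = {}"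
  by (simp add: path_arcs_def)

lemma path_arcs_Cons_Cons [simp]: "path_arcs (x # y # zs) = insert (x, y) (path_arcs (y # zs))"
  by (simp add: path_arcs_def)

lemma path_arcs_snoc: "xs \<noteq> [] \<Longrightarrow> path_arcs (xs @ [z]) = insert (last xs, z) (path_arcs xs)"
  by (induction xs rule: induct_list012) auto

lemma path_arcs_append_Cons: "path_arcs (xs @ y # ys) = path_arcs (xs @ [y]) \<union> path_arcs (y # ys)"
  by (induction xs rule: induct_list012) auto

lemma path_arcs_append_Cons_subset:
  shows path_arcs_prefix_subset: "path_arcs (xs @ [y]) \<subseteq> path_arcs (xs @ y # ys)"
    and path_arcs_suffix_subset: "path_arcs (y # ys) \<subseteq> path_arcs (xs @ y # ys)"
  using path_arcs_append_Cons [of xs y ys] by blast+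

lemma path_arcs_subset: "path_arcs xs \<subseteq> set xs \<times> set xs"
  by (induction xs rule: induct_list012) auto

lemma hd_last_in_rtrancl_path_arcs: "xs \<noteq> [] \<Longrightarrow> (hd xs, last xs) \<in> (path_arcs xs)\<^sup>*"
proof (induction xs rule: induct_list012)
  case (3 x y zs)
  have "(path_arcs (y # zs))\<^sup>* \<subseteq> (path_arcs (x # y # zs))\<^sup>*"
    by (rule rtrancl_mono) auto
  with "3.IH" have "(y, last (y # zs)) \<in> (path_arcs (x # y # zs))\<^sup>*"
    by auto
  then show ?case
    by (auto intro: converse_rtrancl_into_rtrancl)
qed simp_all

lemma in_rtrancl_path_arcs:
  assumes "v \<in> set xs"
  shows "(hd xs, v) \<in> (path_arcs xs)\<^sup>*" and "(v, last xs) \<in> (path_arcs xs)\<^sup>*"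
proof -
  obtain as bs where xs: "xs = as @ v # bs"
    using assms by (meson split_list)
  have prefix: "(path_arcs (as @ [v]))\<^sup>* \<subseteq> (path_arcs xs)\<^sup>*"
    and suffix: "(path_arcs (v # bs))\<^sup>* \<subseteq> (path_arcs xs)\<^sup>*"
    unfolding xs by (rule rtrancl_mono, rule path_arcs_append_Cons_subset)+
  have "(hd (as @ [v]), last (as @ [v])) \<in> (path_arcs (as @ [v]))\<^sup>*"
    by (rule hd_last_in_rtrancl_path_arcs) simp
  then have "(hd xs, v) \<in> (path_arcs (as @ [v]))\<^sup>*"
    by (cases as) (simp_all add: xs)
  then show "(hd xs, v) \<in> (path_arcs xs)\<^sup>*"
    by (rule prefix [THEN subsetD])
  have "(hd (v # bs), last (v # bs)) \<in> (path_arcs (v # bs))\<^sup>*"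
    by (rule hd_last_in_rtrancl_path_arcs) simp
  then have "(v, last xs) \<in> (path_arcs (v # bs))\<^sup>*"
    by (simp add: xs)
  then show "(v, last xs) \<in> (path_arcs xs)\<^sup>*"
    by (rule suffix [THEN subsetD])
qed

lemma reach_refl [simp]: "reach G x x"
  by (simp add: reach_def)

lemma reach_trans: "reach G x y \<Longrightarrow> reach G y z \<Longrightarrow> reach G x z"
  unfolding reach_def by (rule rtrancl_trans)

lemma reach_mono: "arcs G \<subseteq> arcs H \<Longrightarrow> reach G x y \<Longrightarrow> reach H x y"
  unfolding reach_def using rtrancl_mono by blast

lemma reach_imp_dpath:
  assumes "arcs G \<subseteq> verts G \<times> verts G" and "x \<in> verts G" and "reach G x y"
  shows "\<exists>Q. dpath G Q x y"
  using assms(3) unfolding reach_def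
proof (induction rule: rtrancl_induct)
  case base
  have "dpath G [x] x x"
    using assms(2) by (simp add: dpath_def)
  then show ?case by blast
next
  case (step y z)
  then obtain Q where Q: "dpath G Q x y" by blast
  show ?case
  proof (cases "z \<in> set Q")
    case True
    then obtain as bs where Q_split: "Q = as @ z # bs"
      by (meson split_list)
    from Q Q_split path_arcs_prefix_subset [of as z bs] have "dpath G (as @ [z]) x z"
      by (cases as) (auto simp: dpath_def)
    then show ?thesis by blast
  next
    case False
    with Q step.hyps(2) assms(1) have "dpath G (Q @ [z]) x z"
      by (auto simp: dpath_def path_arcs_snoc)
    then show ?thesis by blast
  qed
qed

lemma strongly_connected_imp_dpath:
  assumes "strongly_connected G" and "arcs G \<subseteq> verts G \<times> verts G"
    and "u \<in> verts G" and "w \<in> verts G"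
  shows "\<exists>Q. dpath G Q u w"
proof -
  have "reach G u w"
    using assms(1,3,4) unfolding strongly_connected_def by blast
  then show ?thesis
    by (rule reach_imp_dpath [OF assms(2,3)])
qed

lemma arcs_delete_verts: "arcs (delete_verts G X) = arcs G \<inter> (verts G - X) \<times> (verts G - X)"
  by (simp add: delete_verts_def induced_def arcs_def verts_def)

lemma strong_component_of_vertex:
  assumes "v \<in> verts G"
  shows "strong_component G {w \<in> verts G. reach G v w \<and> reach G w v}"
  using assms unfolding strong_component_def by (blast intro: reach_trans reach_refl)

lemma subgraph_induced:
  assumes "subgraph F G" and "verts F \<subseteq> S"
  shows "subgraph F (induced G S)"
proof -
  have "arcs F \<subseteq> verts F \<times> verts F"
    using assms(1) by (simp add: subgraph_def digraph_def)
  with assms show ?thesis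
    by (auto simp: subgraph_def induced_def verts_def arcs_def)
qed

lemma verts_paths_union: "verts (paths_union P S) = (\<Union>x\<in>S. \<Union>y\<in>S. set (P x y))"
  unfolding paths_union_def graph_Union_def path_graph_def verts_def by (auto; blast)

lemma arcs_paths_union: "arcs (paths_union P S) = (\<Union>x\<in>S. \<Union>y\<in>S. path_arcs (P x y))"
  unfolding paths_union_def graph_Union_def path_graph_def arcs_def by (auto; blast)

lemma arcs_paths_union_subset: "arcs (paths_union P S) \<subseteq> verts (paths_union P S) \<times> verts (paths_union P S)"
  unfolding arcs_paths_union verts_paths_union using path_arcs_subset by blast

lemma reach_paths_union_via:
  assumes "x \<in> S" and "y \<in> S" and "hd (P x y) = x" and "last (P x y) = y" and "v \<in> set (P x y)"
  shows "reach (paths_union P S) x v" and "reach (paths_union P S) v y"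
proof -
  have "path_arcs (P x y) \<subseteq> arcs (paths_union P S)"
    using assms(1,2) unfolding arcs_paths_union by blast
  with in_rtrancl_path_arcs [OF assms(5)] assms(3,4)
  show "reach (paths_union P S) x v" and "reach (paths_union P S) v y"
    unfolding reach_def by (metis rtrancl_mono subsetD)+
qed

context
  fixes P :: "'a \<Rightarrow> 'a \<Rightarrow> 'a list" and S :: "'a set"
  assumes endpoints: "\<forall>x\<in>S. \<forall>y\<in>S. P x y \<noteq> [] \<and> hd (P x y) = x \<and> last (P x y) = y"
begin

lemma subset_verts_paths_union: "S \<subseteq> verts (paths_union P S)"
proof
  fix x assume "x \<in> S"
  with endpoints have "x \<in> set (P x x)"
    by (metis hd_in_set)
  with \<open>x \<in> S\<close> show "x \<in> verts (paths_union P S)"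
    unfolding verts_paths_union by blast
qed

lemma strongly_connected_paths_union: "strongly_connected (paths_union P S)"
  unfolding strongly_connected_def
proof (intro ballI)
  fix u w assume "u \<in> verts (paths_union P S)" "w \<in> verts (paths_union P S)"
  then obtain x y x' y' where xy: "x \<in> S" "y \<in> S" "u \<in> set (P x y)"
    and x'y': "x' \<in> S" "y' \<in> S" "w \<in> set (P x' y')"
    unfolding verts_paths_union by blast
  have ends: "hd (P s t) = s" "last (P s t) = t" if "s \<in> S" "t \<in> S" for s t
    using endpoints that by auto
  have "x' \<in> set (P y x')"
    using endpoints xy(2) x'y'(1) by (metis last_in_set)
  then have "reach (paths_union P S) y x'"
    by (rule reach_paths_union_via(1) [where P = P and S = S, OF xy(2) x'y'(1) ends [OF xy(2) x'y'(1)]])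
  moreover have "reach (paths_union P S) u y"
    by (rule reach_paths_union_via(2) [where P = P and S = S, OF xy(1,2) ends [OF xy(1,2)] xy(3)])
  moreover have "reach (paths_union P S) x' w"
    by (rule reach_paths_union_via(1) [where P = P and S = S, OF x'y'(1,2) ends [OF x'y'(1,2)] x'y'(3)])
  ultimately show "reach (paths_union P S) u w"
    by (blast intro: reach_trans)
qed

end

lemma deletion_set_disconnects_copy:
  assumes "deletion_set \<H> D X" and "subgraph F D" and "\<exists>H\<in>\<H>. isomorphic F H"
    and "verts F \<inter> X = {}"
  shows "\<exists>u\<in>verts F. \<exists>w\<in>verts F. \<not> reach (delete_verts D X) u w"
proof (rule ccontr)
  define G where "G = delete_verts D X"
  assume "\<not> ?thesis"
  then have F_reach: "\<forall>u\<in>verts F. \<forall>w\<in>verts F. reach G u w"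
    unfolding G_def by blast
  obtain v where v: "v \<in> verts F"
    using assms(2) by (auto simp: subgraph_def digraph_def)
  have F_G: "subgraph F G"
    using assms(2,4) subgraph_induced [of F D "verts D - X"]
    by (auto simp: G_def delete_verts_def subgraph_def)
  then have "v \<in> verts G"
    using v by (auto simp: subgraph_def)
  define C where "C = {w \<in> verts G. reach G v w \<and> reach G w v}"
  have "strong_component G C"
    unfolding C_def using \<open>v \<in> verts G\<close> by (rule strong_component_of_vertex)
  moreover have "subgraph F (induced G C)"
    using F_G F_reach v by (intro subgraph_induced) (auto simp: C_def subgraph_def)
  then have "contains_member (induced G C) \<H>"
    using assms(3) unfolding contains_member_def by blast
  ultimately show False
    using assms(1) unfolding deletion_set_def G_def by blast
qed

lemma strongly_connected_meets_deletion_set: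
  assumes "deletion_set \<H> D X" and "subgraph F D" and "\<exists>H\<in>\<H>. isomorphic F H"
    and "strongly_connected U" and "verts F \<subseteq> verts U"
    and "verts U \<subseteq> verts D" and "arcs U \<subseteq> arcs D" and "arcs U \<subseteq> verts U \<times> verts U"
  shows "verts U \<inter> X \<noteq> {}"
proof
  assume U_X: "verts U \<inter> X = {}"
  with assms(6-8) have "arcs U \<subseteq> arcs (delete_verts D X)"
    by (auto simp: arcs_delete_verts)
  with assms(4,5) have "\<forall>u\<in>verts F. \<forall>w\<in>verts F. reach (delete_verts D X) u w"
    unfolding strongly_connected_def by (blast intro: reach_mono)
  with deletion_set_disconnects_copy [OF assms(1-3)] assms(5) U_X show False
    by blast
qed

theorem lemma10:
  fixes \<H> :: "'b digraph set" and D F :: "'a digraph" and X :: "'a set"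
    and P :: "'a \<Rightarrow> 'a \<Rightarrow> 'a list"
  assumes "digraph D"
    and "deletion_set \<H> D X"
    and "subgraph F D"
    and "\<exists>H\<in>\<H>. isomorphic F H"
    and "\<forall>x\<in>verts F. \<forall>y\<in>verts F. dpath D (P x y) x y"
  shows "\<exists>a\<in>X. \<forall>v\<in>verts F.
           (\<exists>Q. dpath (graph_Union {path_graph (P x y) | x y. x \<in> verts F \<and> y \<in> verts F}) Q v a)
         \<and> (\<exists>Q. dpath (graph_Union {path_graph (P x y) | x y. x \<in> verts F \<and> y \<in> verts F}) Q a v)"
proof -
  define U where "U = paths_union P (verts F)"
  have endpoints: "\<forall>x\<in>verts F. \<forall>y\<in>verts F. P x y \<noteq> [] \<and> hd (P x y) = x \<and> last (P x y) = y"
    using assms(5) by (simp add: dpath_def)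
  have U_strong: "strongly_connected U" and F_U: "verts F \<subseteq> verts U"
    unfolding U_def using endpoints
    by (rule strongly_connected_paths_union, rule subset_verts_paths_union)
  have U_D: "verts U \<subseteq> verts D" "arcs U \<subseteq> arcs D"
    using assms(5) unfolding U_def verts_paths_union arcs_paths_union dpath_def by blast+
  have U_wf: "arcs U \<subseteq> verts U \<times> verts U"
    unfolding U_def by (rule arcs_paths_union_subset)
  obtain a where a: "a \<in> verts U" "a \<in> X"
    using strongly_connected_meets_deletion_set [OF assms(2-4) U_strong F_U U_D U_wf] by blast
  have "(\<exists>Q. dpath U Q v a) \<and> (\<exists>Q. dpath U Q a v)" if "v \<in> verts F" for v
  proof -
    from that F_U have v: "v \<in> verts U" by blast
    show ?thesis
      using strongly_connected_imp_dpath [OF U_strong U_wf v a(1)]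
        strongly_connected_imp_dpath [OF U_strong U_wf a(1) v] by blast
  qed
  with a(2) show ?thesis
    unfolding U_def paths_union_def by blast
qed

end
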